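(* Let $p$ be an integer with $1\le p\le13$. There exist constants $c,C>0$ such that for every polynomial $\eta\in\mathbf P^p([-1,1])$ with $\eta(-1)=0$ there exists $\psi\in\mathbf P^{p-1}([-1,1])$ with $\psi(1)=\eta(1)$, $$J(\psi;\eta):=\int_{-1}^1\Big(\eta\psi-\frac14(\eta-\psi)^2\Big)dx\ge c\int_{-1}^1\eta^2\,dx,\qquad\int_{-1}^1\psi^2\,dx\le C\int_{-1}^1\eta^2\,dx.$$
   Context: $\mathbf P^q([-1,1])$ denotes the space of real polynomials of degree at most $q$ on $[-1,1]$. *)

theory Defs
  imports "HOL-Analysis.Analysis" "HOL-Computational_Algebra.Polynomial"
begin

definition J_funct :: "real poly \<Rightarrow> real poly \<Rightarrow> real" where
  "J_funct \<psi> \<eta> = integral {-1..1}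
     (\<lambda>x. poly \<eta> x * poly \<psi> x - (1/4) * (poly \<eta> x - poly \<psi> x)^2)"

end

theory Submission
  imports Defs
begin

text \<open>Split \<open>\<eta> = u + a P\<^sub>p\<close> with \<open>deg u < p\<close> and \<open>P\<^sub>p\<close> the Legendre polynomial;
  \<open>\<eta>(-1) = 0\<close> forces \<open>u(-1) = -(-1)\<^sup>p a\<close>. Take \<open>\<psi> = 3u + ((a - 2u(1))/K) k\<^sub>1\<close>, where \<open>k\<^sub>t\<close>
  is the reproducing kernel of evaluation at \<open>t\<close> on polynomials of degree \<open>< p\<close> and
  \<open>K = k\<^sub>1(1) = p\<^sup>2/2\<close>.
  Then \<open>\<psi>(1) = \<eta>(1)\<close>, and orthogonality gives
  \<open>J(\<psi>;\<eta>) = 2\<parallel>u\<parallel>\<^sup>2 - (a - 2u(1))\<^sup>2/(2p\<^sup>2) - a\<^sup>2/(2(2p+1))\<close> and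
  \<open>\<parallel>\<eta>\<parallel>\<^sup>2 = \<parallel>u\<parallel>\<^sup>2 + 2a\<^sup>2/(2p+1)\<close>, so \<open>J \<ge> c\<parallel>\<eta>\<parallel>\<^sup>2\<close> amounts to a lower bound for \<open>\<parallel>u\<parallel>\<^sup>2\<close> in
  terms of \<open>u(\<plusminus>1)\<close>. The optimal such bound is Bessel's inequality for the orthogonal pair
  \<open>k\<^sub>1 \<plusminus> (-1)\<^sup>p k\<^sub>-\<^sub>1\<close>, and the resulting quadratic form in \<open>u(\<plusminus>1)\<close> is
  positive definite for \<open>p \<le> 13\<close> (and not for \<open>p = 14\<close>). The Legendre facts needed
  (orthogonality, \<open>\<parallel>P\<^sub>n\<parallel>\<^sup>2 = 2/(2n+1)\<close>, \<open>P\<^sub>n(\<plusminus>1) = (\<plusminus>1)\<^sup>n\<close>) are derived from the three-term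
  recurrence via the Legendre differential equation.\<close>

definition l2_inner :: "real poly \<Rightarrow> real poly \<Rightarrow> real" where
  "l2_inner f g = integral {-1..1} (\<lambda>x. poly f x * poly g x)"

lemma integrable_poly_product: "(\<lambda>x. poly f x * poly g x) integrable_on {a..b::real}"
  by (intro integrable_continuous_real continuous_intros)

lemma l2_inner_commute: "l2_inner f g = l2_inner g f"
  unfolding l2_inner_def by (simp add: mult.commute)

lemma l2_inner_add_left: "l2_inner (f + g) h = l2_inner f h + l2_inner g h"
  unfolding l2_inner_def by (simp add: distrib_right integral_add integrable_poly_product)

lemma l2_inner_diff_left: "l2_inner (f - g) h = l2_inner f h - l2_inner g h"
  unfolding l2_inner_def by (simp add: left_diff_distrib integral_diff integrable_poly_product)

lemma l2_inner_smult_left: "l2_inner (smult c f) g = c * l2_inner f g"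
  unfolding l2_inner_def by (simp add: mult.assoc)

lemma l2_inner_add_right: "l2_inner h (f + g) = l2_inner h f + l2_inner h g"
  by (metis l2_inner_add_left l2_inner_commute)

lemma l2_inner_diff_right: "l2_inner h (f - g) = l2_inner h f - l2_inner h g"
  by (metis l2_inner_diff_left l2_inner_commute)

lemma l2_inner_smult_right: "l2_inner f (smult c g) = c * l2_inner f g"
  by (metis l2_inner_smult_left l2_inner_commute)

lemmas l2_inner_simps = l2_inner_add_left l2_inner_diff_left l2_inner_smult_left
  l2_inner_add_right l2_inner_diff_right l2_inner_smult_right

lemma l2_inner_zero_right: "l2_inner f 0 = 0"
  by (simp add: l2_inner_def)

lemma l2_inner_sum_right: "l2_inner f (\<Sum>j\<in>A. g j) = (\<Sum>j\<in>A. l2_inner f (g j))"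
  by (induction A rule: infinite_finite_induct) (simp_all add: l2_inner_zero_right l2_inner_add_right)

lemma l2_inner_nonneg: "0 \<le> l2_inner f f"
  unfolding l2_inner_def by (rule integral_nonneg) (auto intro: integrable_poly_product)

lemma l2_inner_mult_x: "l2_inner ([:0, 1:] * f) g = l2_inner f ([:0, 1:] * g)"
  unfolding l2_inner_def by (simp add: mult_ac)

lemma l2_inner_cauchy_schwarz:
  assumes "0 < l2_inner g g"
  shows "(l2_inner f g)\<^sup>2 \<le> l2_inner f f * l2_inner g g"
proof -
  define a where "a = l2_inner f g / l2_inner g g"
  have "0 \<le> l2_inner (f - smult a g) (f - smult a g)"
    by (rule l2_inner_nonneg)
  also have "\<dots> = l2_inner f f - 2 * a * l2_inner f g + a * (a * l2_inner g g)"
    by (simp add: l2_inner_simps l2_inner_commute[of g f] algebra_simps)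
  also have "\<dots> = l2_inner f f - (l2_inner f g)\<^sup>2 / l2_inner g g"
    using assms by (simp add: a_def power2_eq_square)
  finally show ?thesis
    using assms by (simp add: field_simps)
qed

lemma l2_inner_bessel:
  assumes "l2_inner e1 e2 = 0" and "0 < l2_inner e1 e1" and "0 < l2_inner e2 e2"
  shows "(l2_inner f e1)\<^sup>2 / l2_inner e1 e1 + (l2_inner f e2)\<^sup>2 / l2_inner e2 e2 \<le> l2_inner f f"
proof -
  define a1 a2 where "a1 = l2_inner f e1 / l2_inner e1 e1" and "a2 = l2_inner f e2 / l2_inner e2 e2"
  have "0 \<le> l2_inner (f - smult a1 e1 - smult a2 e2) (f - smult a1 e1 - smult a2 e2)"
    by (rule l2_inner_nonneg)
  also have "\<dots> = l2_inner f f - 2 * a1 * l2_inner f e1 - 2 * a2 * l2_inner f e2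
      + a1 * (a1 * l2_inner e1 e1) + a2 * (a2 * l2_inner e2 e2)"
    using assms(1)
    by (simp add: l2_inner_simps l2_inner_commute[of e1 f] l2_inner_commute[of e2 f]
        l2_inner_commute[of e2 e1] algebra_simps)
  also have "\<dots> = l2_inner f f - (l2_inner f e1)\<^sup>2 / l2_inner e1 e1 - (l2_inner f e2)\<^sup>2 / l2_inner e2 e2"
    using assms(2,3) by (simp add: a1_def a2_def power2_eq_square)
  finally show ?thesis
    by simp
qed

lemma l2_inner_add_le: "l2_inner (f + g) (f + g) \<le> 2 * l2_inner f f + 2 * l2_inner g g"
proof -
  have "0 \<le> l2_inner (f - g) (f - g)"
    by (rule l2_inner_nonneg)
  then show ?thesis
    by (simp add: l2_inner_simps l2_inner_commute[of g f])
qed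

lemma J_funct_l2_inner: "J_funct \<psi> \<eta> = l2_inner \<eta> \<psi> - l2_inner (\<eta> - \<psi>) (\<eta> - \<psi>) / 4"
proof -
  have "J_funct \<psi> \<eta> = integral {-1..1} (\<lambda>x. poly \<eta> x * poly \<psi> x)
      - integral {-1..1} (\<lambda>x. (poly (\<eta> - \<psi>) x * poly (\<eta> - \<psi>) x) / 4)"
    unfolding J_funct_def
    by (subst integral_diff[symmetric])
      (auto intro!: integrable_continuous_real continuous_intros simp: power2_eq_square)
  then show ?thesis
    by (simp add: l2_inner_def)
qed

lemma integral_pderiv:
  fixes q :: "real poly"
  assumes "a \<le> b"
  shows "integral {a..b} (\<lambda>x. poly (pderiv q) x) = poly q b - poly q a"
proof -
  have "((\<lambda>x. poly (pderiv q) x) has_integral poly q b - poly q a) {a..b}"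
    using assms by (intro fundamental_theorem_of_calculus[where f = "poly q"])
      (auto simp: has_real_derivative_iff_has_vector_derivative[symmetric]
            intro: has_field_derivative_at_within)
  then show ?thesis by (rule integral_unique)
qed

definition legendre_operator :: "real poly \<Rightarrow> real poly" where
  "legendre_operator f = pderiv ([:1, 0, -1:] * pderiv f)"

text \<open>With the weight \<open>1 - x\<^sup>2\<close>, which vanishes at \<open>\<plusminus>1\<close>, integration by parts
  has no boundary terms.\<close>

lemma l2_inner_legendre_operator_symmetric:
  "l2_inner (legendre_operator f) g = l2_inner f (legendre_operator g)"
proof -
  have parts: "l2_inner (legendre_operator f) g
      = - integral {-1..1} (\<lambda>x. (1 - x\<^sup>2) * poly (pderiv f) x * poly (pderiv g) x)" for f g
  proof -
    let ?q = "[:1, 0, -1:] * pderiv f * g"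
    have "integral {-1..1} (\<lambda>x. poly (pderiv ?q) x) = 0"
      by (simp add: integral_pderiv)
    moreover have "poly (pderiv ?q) x = poly (pderiv ([:1, 0, -1:] * pderiv f)) x * poly g x
        + (1 - x\<^sup>2) * poly (pderiv f) x * poly (pderiv g) x" for x
    proof -
      have "pderiv [:1, 0, -1 :: real:] = [:0, -2:]"
        by (simp add: pderiv_pCons)
      then show ?thesis
        by (simp only: pderiv_mult poly_mult poly_add) (simp add: algebra_simps power2_eq_square)
    qed
    ultimately show ?thesis
      unfolding l2_inner_def legendre_operator_def
      by (simp add: integral_add integrable_poly_product integrable_continuous_real continuous_intros
          eq_neg_iff_add_eq_0)
  qed
  show ?thesis
    unfolding l2_inner_commute[of f] parts by (simp add: mult_ac)
qed

fun legendre :: "nat \<Rightarrow> real poly" where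
  "legendre 0 = 1"
| "legendre (Suc 0) = [:0, 1:]"
| "legendre (Suc (Suc n)) = smult (1 / (n + 2))
     (smult (2 * n + 3) ([:0, 1:] * legendre (Suc n)) - smult (n + 1) (legendre n))"

text \<open>Uniform in \<open>n\<close>: at \<open>n = 0\<close> the truncated index \<open>n - 1\<close> has coefficient \<open>0\<close>.\<close>

lemma legendre_recurrence:
  "smult (n + 1) (legendre (Suc n)) = smult (2 * n + 1) ([:0, 1:] * legendre n) - smult n (legendre (n - 1))"
  by (cases n rule: legendre.cases) (simp_all add: algebra_simps)

declare legendre.simps(3) [simp del]

lemma legendre_derivative_identities:
  "[:0, 1:] * pderiv (legendre (Suc n)) - pderiv (legendre n) = smult (n + 1) (legendre (Suc n))
   \<and> [:-1, 0, 1:] * pderiv (legendre (Suc n)) = smult (n + 1) ([:0, 1:] * legendre (Suc n) - legendre n)"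
proof (induction n)
  case 0
  then show ?case by (simp add: pderiv_pCons one_pCons)
next
  case (Suc n)
  have "poly ([:0, 1:] * pderiv (legendre (Suc (Suc n))) - pderiv (legendre (Suc n))) x
        = poly (smult (real (Suc n) + 1) (legendre (Suc (Suc n)))) x
      \<and> poly ([:-1, 0, 1:] * pderiv (legendre (Suc (Suc n)))) x
        = poly (smult (real (Suc n) + 1) ([:0, 1:] * legendre (Suc (Suc n)) - legendre (Suc n))) x" for x
  proof -
    define P0 P1 P2 where "P0 = poly (legendre n) x" and "P1 = poly (legendre (Suc n)) x"
      and "P2 = poly (legendre (Suc (Suc n))) x"
    define D0 D1 D2 where "D0 = poly (pderiv (legendre n)) x"
      and "D1 = poly (pderiv (legendre (Suc n))) x" and "D2 = poly (pderiv (legendre (Suc (Suc n)))) x"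
    have rec: "(real n + 2) * P2 = (2 * real n + 3) * x * P1 - (real n + 1) * P0"
      using arg_cong[OF legendre_recurrence[of "Suc n"], of "\<lambda>p. poly p x"]
      by (simp add: P0_def P1_def P2_def algebra_simps)
    have drec: "(real n + 2) * D2 = (2 * real n + 3) * (P1 + x * D1) - (real n + 1) * D0"
      using arg_cong[OF legendre_recurrence[of "Suc n"], of "\<lambda>p. poly (pderiv p) x"]
      by (simp add: P1_def D0_def D1_def D2_def pderiv_smult pderiv_diff pderiv_mult pderiv_pCons
          algebra_simps)
    have I: "x * D1 - D0 = (real n + 1) * P1" and C: "(x\<^sup>2 - 1) * D1 = (real n + 1) * (x * P1 - P0)"
      using arg_cong[OF conjunct1[OF Suc.IH], of "\<lambda>p. poly p x"]
        arg_cong[OF conjunct2[OF Suc.IH], of "\<lambda>p. poly p x"]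
      by (simp_all add: P0_def P1_def D0_def D1_def algebra_simps power2_eq_square)
    have "(real n + 2) * D2 = (real n + 2) * (x * D1 + (real n + 2) * P1)"
      using drec I by algebra
    then have step: "D2 = x * D1 + (real n + 2) * P1"
      by simp
    have "x * D2 - D1 = (real n + 2) * P2" and "(x\<^sup>2 - 1) * D2 = (real n + 2) * (x * P2 - P1)"
      using rec step C by algebra+
    then show ?thesis
      by (simp add: P0_def P1_def P2_def D1_def D2_def algebra_simps power2_eq_square)
  qed
  then show ?case
    by (simp only: poly_eq_poly_eq_iff[symmetric] fun_eq_iff) blast
qed

lemma legendre_differential_equation:
  "legendre_operator (legendre n) = smult (- (n * (n + 1))) (legendre n)"
proof (cases n)
  case (Suc m)
  have "poly (legendre_operator (legendre (Suc m))) x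
      = - ((real m + 1) * (real m + 2)) * poly (legendre (Suc m)) x" for x
  proof -
    have "poly (pderiv ([:-1, 0, 1:] * pderiv (legendre (Suc m)))) x
        = (real m + 1) * (poly (legendre (Suc m)) x
            + (x * poly (pderiv (legendre (Suc m))) x - poly (pderiv (legendre m)) x))"
      using arg_cong[OF conjunct2[OF legendre_derivative_identities[of m]], of "\<lambda>p. poly (pderiv p) x"]
      unfolding pderiv_mult pderiv_smult pderiv_diff by (simp add: pderiv_pCons algebra_simps)
    moreover have "x * poly (pderiv (legendre (Suc m))) x - poly (pderiv (legendre m)) x
        = (real m + 1) * poly (legendre (Suc m)) x"
      using arg_cong[OF conjunct1[OF legendre_derivative_identities[of m]], of "\<lambda>p. poly p x"]
      by (simp add: algebra_simps)
    moreover have "poly (legendre_operator (legendre (Suc m))) x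
        = - poly (pderiv ([:-1, 0, 1:] * pderiv (legendre (Suc m)))) x"
      unfolding legendre_operator_def pderiv_mult by (simp add: pderiv_pCons algebra_simps)
    ultimately show ?thesis
      by (simp add: algebra_simps)
  qed
  then show ?thesis
    using Suc by (intro poly_ext) (simp add: algebra_simps)
qed (simp add: legendre_operator_def)

lemma l2_inner_legendre_orthogonal:
  assumes "m \<noteq> n"
  shows "l2_inner (legendre m) (legendre n) = 0"
proof -
  have "- (real m * (real m + 1)) * l2_inner (legendre m) (legendre n)
      = - (real n * (real n + 1)) * l2_inner (legendre m) (legendre n)"
    using l2_inner_legendre_operator_symmetric[of "legendre m" "legendre n"]
    by (simp only: legendre_differential_equation l2_inner_smult_left l2_inner_smult_right)
  moreover have "real m * (real m + 1) \<noteq> real n * (real n + 1)"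
  proof
    assume "real m * (real m + 1) = real n * (real n + 1)"
    then have "(real m - real n) * (real m + real n + 1) = 0"
      by (simp add: algebra_simps)
    with assms show False
      by auto
  qed
  ultimately show ?thesis
    by (metis mult_cancel_right neg_equal_iff_equal)
qed

text \<open>Pairing the recurrence at \<open>n + 1\<close> with \<open>P\<^sub>n\<close> and at \<open>n\<close> with \<open>P\<^sub>n\<^sub>+\<^sub>1\<close> gives
  \<open>\<parallel>P\<^sub>n\<^sub>+\<^sub>1\<parallel>\<^sup>2 = (2n+1)/(2n+3) \<parallel>P\<^sub>n\<parallel>\<^sup>2\<close>.\<close>

lemma l2_inner_legendre_self: "l2_inner (legendre n) (legendre n) = 2 / (2 * n + 1)"
proof (induction n)
  case 0
  then show ?case by (simp add: l2_inner_def)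
next
  case (Suc n)
  define X where "X = [:0, 1 :: real:]"
  define Y where "Y = l2_inner (X * legendre (Suc n)) (legendre n)"
  have "(2 * real n + 3) * Y = (real n + 1) * l2_inner (legendre n) (legendre n)"
    using arg_cong[OF legendre_recurrence[of "Suc n"], of "\<lambda>p. l2_inner p (legendre n)"]
    by (simp add: Y_def l2_inner_simps l2_inner_legendre_orthogonal algebra_simps flip: X_def)
  then have Y: "(2 * real n + 1) * Y = 2 * (real n + 1) / (2 * real n + 3)"
    using Suc.IH by (simp add: field_simps)
  have "l2_inner (X * legendre n) (legendre (Suc n)) = Y"
    unfolding X_def Y_def by (metis l2_inner_mult_x l2_inner_commute)
  then have "(real n + 1) * l2_inner (legendre (Suc n)) (legendre (Suc n)) = (2 * real n + 1) * Y"
    using arg_cong[OF legendre_recurrence[of n], of "\<lambda>p. l2_inner p (legendre (Suc n))"]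
    by (simp add: l2_inner_simps l2_inner_legendre_orthogonal flip: X_def)
  with Y have "(real n + 1) * l2_inner (legendre (Suc n)) (legendre (Suc n))
      = (real n + 1) * (2 / (2 * real n + 3))"
    by simp
  then have "l2_inner (legendre (Suc n)) (legendre (Suc n)) = 2 / (2 * real n + 3)"
    by (metis mult_left_cancel add_nonneg_eq_0_iff of_nat_0_le_iff zero_le_one zero_neq_one)
  then show ?case
    by (simp add: algebra_simps)
qed

lemma degree_legendre_le: "degree (legendre n) \<le> n"
  and coeff_legendre_pos: "0 < coeff (legendre n) n"
proof (induction n rule: legendre.induct)
  case (3 n)
  case 1
  show ?case
    using 3 by (auto simp: legendre.simps(3) coeff_eq_0 intro!: degree_le)
next
  case (3 n)
  case 2
  show ?case
    using 3 by (simp add: legendre.simps(3) coeff_eq_0)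
qed (simp_all add: degree_pCons_eq_if)

lemma degree_legendre: "degree (legendre n) = n"
  using degree_legendre_le coeff_legendre_pos by (metis le_antisym le_degree less_irrefl)

lemma legendre_nonzero: "legendre n \<noteq> 0"
  using coeff_legendre_pos[of n] by auto

lemma poly_legendre_one: "poly (legendre n) 1 = 1"
  by (induction n rule: legendre.induct) (simp_all add: legendre.simps(3) field_simps)

lemma poly_legendre_minus_one: "poly (legendre n) (-1) = (-1) ^ n"
  by (induction n rule: legendre.induct) (simp_all add: legendre.simps(3) field_simps)

lemma linear_functional_vanishes_below_degree:
  fixes B :: "nat \<Rightarrow> 'a::field poly" and T :: "'a poly \<Rightarrow> 'a"
  assumes degree_B: "\<And>j. degree (B j) = j" and nonzero_B: "\<And>j. B j \<noteq> 0"
    and additive: "\<And>f g. T (f + g) = T f + T g" and homogeneous: "\<And>c f. T (smult c f) = c * T f"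
    and vanishes: "\<And>j. j < n \<Longrightarrow> T (B j) = 0"
    and "degree v < n"
  shows "T v = 0"
  using vanishes \<open>degree v < n\<close>
proof (induction n arbitrary: v)
  case (Suc n)
  show ?case
  proof (cases "degree v < n")
    case True
    then show ?thesis using Suc by simp
  next
    case False
    define c where "c = coeff v n / coeff (B n) n"
    define w where "w = v - smult c (B n)"
    have lead_B: "coeff (B n) n \<noteq> 0"
      using degree_B nonzero_B leading_coeff_neq_0 by metis
    have "\<forall>k\<ge>n. coeff w k = 0"
      using False Suc.prems(2) lead_B degree_B[of n]
      by (auto simp: w_def c_def coeff_eq_0 le_less)
    then have "w = 0 \<or> degree w < n"
      by (metis degree_lessI)
    moreover have "T 0 = 0"
      using homogeneous[of 0 0] by simp
    ultimately have "T w = 0"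
      using Suc by auto
    moreover have "T v = T w + c * T (B n)"
      unfolding w_def by (metis additive homogeneous diff_add_cancel)
    ultimately show ?thesis
      using Suc.prems(1) by simp
  qed
qed simp

lemma l2_inner_legendre_lower_degree:
  assumes "degree v < n"
  shows "l2_inner v (legendre n) = 0"
  by (rule linear_functional_vanishes_below_degree[where B = legendre and n = n])
    (simp_all add: assms degree_legendre legendre_nonzero l2_inner_simps l2_inner_legendre_orthogonal)

lemma legendre_decomposition:
  assumes "1 \<le> p" and "degree \<eta> \<le> p"
  obtains u a where "degree u < p" and "\<eta> = u + smult a (legendre p)"
proof
  define a where "a = coeff \<eta> p / coeff (legendre p) p"
  show "\<eta> = (\<eta> - smult a (legendre p)) + smult a (legendre p)"
    by simp
  have "\<forall>k\<ge>p. coeff (\<eta> - smult a (legendre p)) k = 0"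
    using assms(2) coeff_legendre_pos[of p] degree_legendre[of p]
    by (auto simp: a_def coeff_eq_0 le_less)
  then show "degree (\<eta> - smult a (legendre p)) < p"
    using assms(1) by (intro degree_lessI) auto
qed

definition legendre_kernel :: "nat \<Rightarrow> real \<Rightarrow> real poly" where
  "legendre_kernel n t = (\<Sum>j<n. smult ((2 * real j + 1) / 2 * poly (legendre j) t) (legendre j))"

lemma degree_legendre_kernel: "degree (legendre_kernel n t) \<le> n - 1"
  unfolding legendre_kernel_def
  by (intro degree_sum_le order.trans[OF degree_smult_le]) (auto simp: degree_legendre)

lemma l2_inner_legendre_kernel:
  assumes "degree v < n"
  shows "l2_inner v (legendre_kernel n t) = poly v t"
proof -
  have "l2_inner v (legendre_kernel n t) - poly v t = 0"
  proof (rule linear_functional_vanishes_below_degree[where B = legendre and n = n])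
    fix j
    assume "j < n"
    have "l2_inner (legendre j) (legendre_kernel n t)
        = (\<Sum>i<n. poly (legendre i) t * ((2 * real i + 1) / 2 * l2_inner (legendre j) (legendre i)))"
      by (simp add: legendre_kernel_def l2_inner_sum_right l2_inner_smult_right mult_ac)
    also have "\<dots> = (\<Sum>i<n. if j = i then poly (legendre i) t else 0)"
    proof (rule sum.cong)
      fix i
      have "(2 * real i + 1) / 2 * (2 / (2 * real i + 1)) = 1"
        by (simp add: add_nonneg_eq_0_iff)
      then show "poly (legendre i) t * ((2 * real i + 1) / 2 * l2_inner (legendre j) (legendre i))
          = (if j = i then poly (legendre i) t else 0)"
        by (cases "j = i")
          (simp_all only: l2_inner_legendre_self mult_1_right, simp_all add: l2_inner_legendre_orthogonal)
    qed simp
    finally show "l2_inner (legendre j) (legendre_kernel n t) - poly (legendre j) t = 0"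
      using \<open>j < n\<close> by simp
  qed (simp_all add: degree_legendre legendre_nonzero assms l2_inner_simps right_diff_distrib)
  then show ?thesis
    by simp
qed

lemma poly_legendre_kernel:
  "poly (legendre_kernel n t) s = (\<Sum>j<n. (2 * real j + 1) / 2 * poly (legendre j) t * poly (legendre j) s)"
  by (simp add: legendre_kernel_def poly_sum)

lemma legendre_kernel_diagonal:
  assumes "t = 1 \<or> t = -1"
  shows "poly (legendre_kernel n t) t = (real n)\<^sup>2 / 2"
proof -
  have "(\<Sum>j<n. (2 * real j + 1) / 2) = (real n)\<^sup>2 / 2"
    by (induction n) (simp_all add: field_simps power2_eq_square)
  moreover have "(-1 :: real) ^ j * (-1) ^ j = 1" for j
    by (simp flip: power_mult_distrib)
  ultimately show ?thesis
    using assms by (auto simp: poly_legendre_kernel poly_legendre_one poly_legendre_minus_one mult.assoc)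
qed

lemma legendre_kernel_off_diagonal:
  "poly (legendre_kernel n 1) (-1) = (-1 :: real) ^ Suc n * real n / 2"
proof -
  have "(\<Sum>j<n. (2 * real j + 1) / 2 * (-1) ^ j) = (-1 :: real) ^ Suc n * real n / 2"
    by (induction n) (simp_all add: field_simps)
  then show ?thesis
    by (simp add: poly_legendre_kernel poly_legendre_one poly_legendre_minus_one)
qed

text \<open>Bessel's inequality for the orthogonal pair \<open>k\<^sub>1 \<plusminus> (-1)\<^sup>p k\<^sub>-\<^sub>1\<close> of reproducing kernels,
  whose inner products with \<open>u\<close> are \<open>u(1) \<plusminus> (-1)\<^sup>p u(-1)\<close>.\<close>

lemma endpoint_values_le_l2_inner:
  assumes "2 \<le> p" and "degree u < p"
  shows "(poly u 1 + (-1) ^ p * poly u (-1))\<^sup>2 / (real p * (real p - 1))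
       + (poly u 1 - (-1) ^ p * poly u (-1))\<^sup>2 / (real p * (real p + 1)) \<le> l2_inner u u"
proof -
  define s :: real where "s = (-1) ^ p"
  define k1 k2 where "k1 = legendre_kernel p 1" and "k2 = legendre_kernel p (-1)"
  have s2: "s * (s * t) = t" for t
    by (simp add: s_def mult.assoc[symmetric] flip: power_mult_distrib)
  have "p - 1 < p"
    using assms(1) by simp
  then have deg1: "degree k1 < p" and deg2: "degree k2 < p"
    unfolding k1_def k2_def by (meson degree_legendre_kernel le_less_trans)+
  have k11: "l2_inner k1 k1 = (real p)\<^sup>2 / 2"
    using l2_inner_legendre_kernel[OF deg1, of 1] legendre_kernel_diagonal[of 1 p]
    unfolding k1_def by simp
  have k22: "l2_inner k2 k2 = (real p)\<^sup>2 / 2"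
    using l2_inner_legendre_kernel[OF deg2, of "-1"] legendre_kernel_diagonal[of "-1" p]
    unfolding k2_def by simp
  have k12: "l2_inner k1 k2 = - s * p / 2"
    using l2_inner_legendre_kernel[OF deg1, of "-1"] legendre_kernel_off_diagonal[of p]
    unfolding k1_def k2_def s_def by simp
  have k21: "l2_inner k2 k1 = - s * p / 2"
    using k12 by (simp add: l2_inner_commute)
  have uk: "l2_inner u k1 = poly u 1" "l2_inner u k2 = poly u (-1)"
    by (simp_all add: l2_inner_legendre_kernel k1_def k2_def assms(2))
  define e1 e2 where "e1 = k1 + smult s k2" and "e2 = k1 - smult s k2"
  have "l2_inner e1 e2 = 0"
    by (simp add: e1_def e2_def l2_inner_simps k11 k22 k12 k21 algebra_simps s2)
  moreover have "l2_inner e1 e1 = real p * (real p - 1)" and "l2_inner e2 e2 = real p * (real p + 1)"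
    by (simp_all add: e1_def e2_def l2_inner_simps k11 k22 k12 k21 algebra_simps power2_eq_square s2)
  moreover have "0 < real p * (real p - 1)" and "0 < real p * (real p + 1)"
    using assms(1) by simp_all
  moreover have "l2_inner u e1 = poly u 1 + s * poly u (-1)" and "l2_inner u e2 = poly u 1 - s * poly u (-1)"
    by (simp_all add: e1_def e2_def l2_inner_simps uk)
  ultimately show ?thesis
    using l2_inner_bessel[of e1 e2 u] by (simp add: s_def)
qed

lemma quadratic_form_nonneg:
  fixes a b c x z :: real
  assumes "0 < a" and "b\<^sup>2 \<le> 4 * a * c"
  shows "0 \<le> a * x\<^sup>2 + b * x * z + c * z\<^sup>2"
proof -
  have "4 * a * (a * x\<^sup>2 + b * x * z + c * z\<^sup>2) = (2 * a * x + b * z)\<^sup>2 + (4 * a * c - b\<^sup>2) * z\<^sup>2"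
    by (simp add: algebra_simps power2_eq_square)
  also have "0 \<le> \<dots>"
    using assms(2) by simp
  finally show ?thesis
    using assms(1) by (simp add: zero_le_mult_iff)
qed

text \<open>This is the only place where \<open>p \<le> 13\<close> is used: the difference of the two sides is a
  quadratic form in \<open>(x, z)\<close> that is positive definite for \<open>2 \<le> p \<le> 13\<close>, but indefinite for
  \<open>p = 14\<close> even with \<open>1/256\<close> replaced by \<open>0\<close>.\<close>

lemma endpoint_quadratic_form_le:
  fixes x z :: real
  assumes "2 \<le> p" and "p \<le> 13"
  shows "(z + 2 * x)\<^sup>2 / (2 * (real p)\<^sup>2) + (1 + 4 * (1 / 256)) * z\<^sup>2 / (2 * (2 * real p + 1))
    \<le> (2 - 1 / 256) * ((x + z)\<^sup>2 / (real p * (real p - 1)) + (x - z)\<^sup>2 / (real p * (real p + 1)))"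
proof -
  define c :: real where "c = 1 / 256"
  define q1 q2 w v :: real where "q1 = 1 / (real p * (real p - 1))" and "q2 = 1 / (real p * (real p + 1))"
    and "w = 1 / (real p)\<^sup>2" and "v = 1 / (2 * real p + 1)"
  define A B C where "A = (2 - c) * (q1 + q2) - 2 * w" and "B = 2 * (2 - c) * (q1 - q2) - 2 * w"
    and "C = (2 - c) * (q1 + q2) - w / 2 - (1 + 4 * c) * v / 2"
  have "p = 2 \<or> p = 3 \<or> p = 4 \<or> p = 5 \<or> p = 6 \<or> p = 7 \<or> p = 8 \<or> p = 9 \<or> p = 10 \<or> p = 11
      \<or> p = 12 \<or> p = 13"
    using assms by presburger
  then have "0 < A \<and> B\<^sup>2 \<le> 4 * A * C"
    by (elim disjE) (simp_all add: A_def B_def C_def c_def q1_def q2_def w_def v_def power2_eq_square)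
  then have "0 \<le> A * x\<^sup>2 + B * x * z + C * z\<^sup>2"
    by (simp add: quadratic_form_nonneg)
  also have "A * x\<^sup>2 + B * x * z + C * z\<^sup>2
      = (2 - c) * ((x + z)\<^sup>2 * q1 + (x - z)\<^sup>2 * q2) - ((z + 2 * x)\<^sup>2 * w / 2 + (1 + 4 * c) * z\<^sup>2 * v / 2)"
    unfolding A_def B_def C_def by (simp add: power2_eq_square algebra_simps)
  finally show ?thesis
    by (simp add: c_def q1_def q2_def w_def v_def)
qed

text \<open>For \<open>\<eta> = u + a P\<^sub>p\<close> with \<open>\<eta>(-1) = 0\<close> one has \<open>u(-1) = -(-1)\<^sup>p a\<close>, and the inequality below
  becomes \<open>c\<parallel>\<eta>\<parallel>\<^sup>2 \<le> J(\<psi>;\<eta>)\<close> for \<open>\<psi> = 3u + ((a - 2u(1))/K) k\<^sub>1\<close>.\<close>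

definition endpoint_estimate :: "nat \<Rightarrow> real \<Rightarrow> bool" where
  "endpoint_estimate p c \<longleftrightarrow> (\<forall>u. degree u < p \<longrightarrow>
     (poly u (-1) + 2 * (-1) ^ p * poly u 1)\<^sup>2 / (2 * (real p)\<^sup>2)
       + (1 + 4 * c) * (poly u (-1))\<^sup>2 / (2 * (2 * real p + 1))
     \<le> (2 - c) * l2_inner u u)"

lemma endpoint_estimate_upto_13:
  assumes "1 \<le> p" and "p \<le> 13"
  shows "endpoint_estimate p (1 / 256)"
  unfolding endpoint_estimate_def
proof (intro allI impI)
  fix u :: "real poly"
  assume deg: "degree u < p"
  show "(poly u (-1) + 2 * (-1) ^ p * poly u 1)\<^sup>2 / (2 * (real p)\<^sup>2)
       + (1 + 4 * (1 / 256)) * (poly u (-1))\<^sup>2 / (2 * (2 * real p + 1))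
     \<le> (2 - 1 / 256) * l2_inner u u"
  proof (cases "p = 1")
    case True
    then obtain t where u: "u = [:t:]"
      using deg by (metis degree0_coeffs less_one)
    have "l2_inner u u = 2 * (t * t)"
      by (simp add: u l2_inner_def)
    then show ?thesis
      using True zero_le_square[of t] by (simp add: u power2_eq_square)
  next
    case False
    define s :: real where "s = (-1) ^ p"
    define x z where "x = poly u 1" and "z = s * poly u (-1)"
    have s2: "s * (s * t) = t" for t
      by (simp add: s_def mult.assoc[symmetric] flip: power_mult_distrib)
    have "poly u (-1) = s * z"
      by (simp add: z_def s2)
    then have "(poly u (-1) + 2 * (-1) ^ p * poly u 1)\<^sup>2 = (z + 2 * x)\<^sup>2"
      and "(poly u (-1))\<^sup>2 = z\<^sup>2"
      by (simp_all add: x_def power2_eq_square algebra_simps s2 flip: s_def)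
    then have "(poly u (-1) + 2 * (-1) ^ p * poly u 1)\<^sup>2 / (2 * (real p)\<^sup>2)
        + (1 + 4 * (1 / 256)) * (poly u (-1))\<^sup>2 / (2 * (2 * real p + 1))
      = (z + 2 * x)\<^sup>2 / (2 * (real p)\<^sup>2) + (1 + 4 * (1 / 256)) * z\<^sup>2 / (2 * (2 * real p + 1))"
      by (simp only:)
    also have "\<dots> \<le> (2 - 1 / 256)
        * ((x + z)\<^sup>2 / (real p * (real p - 1)) + (x - z)\<^sup>2 / (real p * (real p + 1)))"
      using False assms by (intro endpoint_quadratic_form_le) auto
    also have "\<dots> \<le> (2 - 1 / 256) * l2_inner u u"
      using endpoint_values_le_l2_inner[OF _ deg] False assms(1)
      by (intro mult_left_mono) (simp_all add: x_def z_def s_def)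
    finally show ?thesis .
  qed
qed

lemma J_funct_construction:
  assumes "l2_inner u L = 0" and "l2_inner k L = 0" and "l2_inner u k = x" and "l2_inner k k = K"
    and "K \<noteq> 0"
  shows "J_funct (smult 3 u + smult (d / K) k) (u + smult a L)
    = 2 * l2_inner u u - d\<^sup>2 / (4 * K) - a\<^sup>2 * l2_inner L L / 4"
proof -
  have sym: "l2_inner L u = 0" "l2_inner L k = 0" "l2_inner k u = x"
    using assms(1-3) by (simp_all add: l2_inner_commute)
  have "l2_inner (u + smult a L) (smult 3 u + smult (d / K) k) = 3 * l2_inner u u + d / K * x"
    using assms sym by (simp add: l2_inner_simps)
  moreover have "l2_inner (u + smult a L - (smult 3 u + smult (d / K) k))
      (u + smult a L - (smult 3 u + smult (d / K) k))
    = 4 * l2_inner u u + 4 * (d / K) * x + (d / K) * (d / K) * K + a * a * l2_inner L L"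
    using assms sym by (simp add: l2_inner_simps algebra_simps)
  ultimately show ?thesis
    using assms(5) by (simp add: J_funct_l2_inner field_simps power2_eq_square)
qed

lemma endpoint_estimateD:
  assumes "endpoint_estimate p c" and "degree u < p" and "poly u (-1) = - a * (-1) ^ p"
  shows "(a - 2 * poly u 1)\<^sup>2 / (2 * (real p)\<^sup>2) + (1 + 4 * c) * a\<^sup>2 / (2 * (2 * real p + 1))
    \<le> (2 - c) * l2_inner u u"
proof -
  have sign: "((-1 :: real) ^ p)\<^sup>2 = 1"
    by (simp flip: power_mult)
  have "poly u (-1) + 2 * (-1) ^ p * poly u 1 = - ((-1) ^ p * (a - 2 * poly u 1))"
    by (simp add: assms(3) algebra_simps)
  then have "(poly u (-1) + 2 * (-1) ^ p * poly u 1)\<^sup>2 = (a - 2 * poly u 1)\<^sup>2"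
    and "(poly u (-1))\<^sup>2 = a\<^sup>2"
    by (simp_all add: assms(3) power_mult_distrib sign)
  moreover have "(poly u (-1) + 2 * (-1) ^ p * poly u 1)\<^sup>2 / (2 * (real p)\<^sup>2)
      + (1 + 4 * c) * (poly u (-1))\<^sup>2 / (2 * (2 * real p + 1)) \<le> (2 - c) * l2_inner u u"
    using assms(1,2) unfolding endpoint_estimate_def by blast
  ultimately show ?thesis
    by simp
qed

lemma l2_inner_psi_le:
  fixes a :: real
  assumes "l2_inner u k = x" and "l2_inner k k = K" and "0 < K"
  defines "\<psi> \<equiv> smult 3 u + smult ((a - 2 * x) / K) k"
  shows "l2_inner \<psi> \<psi> \<le> 34 * l2_inner u u + 4 * (a\<^sup>2 / K)"
proof -
  have "x\<^sup>2 / K \<le> l2_inner u u"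
    using l2_inner_cauchy_schwarz[of k u] assms(1-3) by (simp add: pos_divide_le_eq)
  moreover have "(a - 2 * x)\<^sup>2 \<le> 2 * a\<^sup>2 + 8 * x\<^sup>2"
    using sum_squares_ge_zero[of "a + 2 * x" 0] by (simp add: power2_eq_square algebra_simps)
  then have "(a - 2 * x)\<^sup>2 / K \<le> 2 * (a\<^sup>2 / K) + 8 * (x\<^sup>2 / K)"
    using assms(3) divide_right_mono[of "(a - 2 * x)\<^sup>2" "2 * a\<^sup>2 + 8 * x\<^sup>2" K]
    by (simp add: add_divide_distrib)
  moreover have "l2_inner \<psi> \<psi> \<le> 18 * l2_inner u u + 2 * ((a - 2 * x)\<^sup>2 / K)"
    using l2_inner_add_le[of "smult 3 u" "smult ((a - 2 * x) / K) k"] assms(2,3)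
    by (simp add: \<psi>_def l2_inner_simps power2_eq_square)
  ultimately show ?thesis
    by linarith
qed

lemma l2_inner_legendre_decomposition:
  assumes "degree u < p"
  shows "l2_inner (u + smult a (legendre p)) (u + smult a (legendre p))
    = l2_inner u u + a\<^sup>2 * (2 / (2 * real p + 1))"
  using l2_inner_legendre_lower_degree[OF assms] l2_inner_legendre_self[of p]
  by (simp add: l2_inner_simps l2_inner_commute[of "legendre p" u] power2_eq_square)

lemma J_funct_legendre_construction:
  assumes "1 \<le> p" and "degree u < p"
  defines "K \<equiv> (real p)\<^sup>2 / 2"
  shows "J_funct (smult 3 u + smult (d / K) (legendre_kernel p 1)) (u + smult a (legendre p))
    = 2 * l2_inner u u - d\<^sup>2 / (2 * (real p)\<^sup>2) - a\<^sup>2 / (2 * (2 * real p + 1))"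
proof -
  have deg_k: "degree (legendre_kernel p 1) < p"
    using degree_legendre_kernel[of p 1] assms(1) by linarith
  have kk: "l2_inner (legendre_kernel p 1) (legendre_kernel p 1) = K"
    using deg_k legendre_kernel_diagonal[of 1 p] by (simp add: K_def l2_inner_legendre_kernel)
  have "J_funct (smult 3 u + smult (d / K) (legendre_kernel p 1)) (u + smult a (legendre p))
      = 2 * l2_inner u u - d\<^sup>2 / (4 * K) - a\<^sup>2 * (2 / (2 * real p + 1)) / 4"
    using J_funct_construction[OF l2_inner_legendre_lower_degree[OF assms(2)]
        l2_inner_legendre_lower_degree[OF deg_k] l2_inner_legendre_kernel[OF assms(2)] kk]
      assms(1)
    by (simp add: K_def l2_inner_legendre_self)
  moreover have "4 * K = 2 * (real p)\<^sup>2"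
    by (simp add: K_def)
  moreover have "a\<^sup>2 * (2 / (2 * real p + 1)) / 4 = a\<^sup>2 / (2 * (2 * real p + 1))"
    by (simp add: field_simps add_nonneg_eq_0_iff)
  ultimately show ?thesis
    by simp
qed

lemma l2_inner_legendre_psi_le:
  fixes a :: real
  assumes "1 \<le> p" and "degree u < p"
  defines "K \<equiv> (real p)\<^sup>2 / 2"
  defines "\<psi> \<equiv> smult 3 u + smult ((a - 2 * poly u 1) / K) (legendre_kernel p 1)"
  shows "l2_inner \<psi> \<psi> \<le> 34 * (l2_inner u u + a\<^sup>2 * (2 / (2 * real p + 1)))"
proof -
  have K_pos: "0 < K"
    using assms(1) by (simp add: K_def)
  have deg_k: "degree (legendre_kernel p 1) < p"
    using degree_legendre_kernel[of p 1] assms(1) by linarith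
  have p1: "1 \<le> real p"
    using assms(1) by simp
  then have "real p \<le> real p * real p"
    using mult_right_mono[of 1 "real p" "real p"] by simp
  with p1 have "8 + real p * 16 \<le> real p * (real p * 68)"
    by linarith
  then have "4 / K \<le> 34 * (2 / (2 * real p + 1))"
    by (simp add: K_def field_simps power2_eq_square)
  then have "4 * (a\<^sup>2 / K) \<le> 34 * (a\<^sup>2 * (2 / (2 * real p + 1)))"
    using mult_right_mono[of "4 / K" "34 * (2 / (2 * real p + 1))" "a\<^sup>2"] by (simp add: mult_ac)
  moreover have "l2_inner \<psi> \<psi> \<le> 34 * l2_inner u u + 4 * (a\<^sup>2 / K)"
    using assms(2) deg_k legendre_kernel_diagonal[of 1 p] K_pos unfolding \<psi>_def
    by (intro l2_inner_psi_le) (simp_all add: K_def l2_inner_legendre_kernel)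
  ultimately show ?thesis
    by (simp add: distrib_left)
qed

lemma exists_psi_bounding_J_funct:
  assumes "1 \<le> p" and "endpoint_estimate p c" and "degree \<eta> \<le> p" and "poly \<eta> (-1) = 0"
  shows "\<exists>\<psi>. degree \<psi> \<le> p - 1 \<and> poly \<psi> 1 = poly \<eta> 1
    \<and> c * l2_inner \<eta> \<eta> \<le> J_funct \<psi> \<eta> \<and> l2_inner \<psi> \<psi> \<le> 34 * l2_inner \<eta> \<eta>"
proof -
  obtain u a where deg_u: "degree u < p" and \<eta>: "\<eta> = u + smult a (legendre p)"
    using legendre_decomposition assms(1,3) by blast
  define k x N h K where "k = legendre_kernel p 1" and "x = poly u 1" and "N = l2_inner u u"
    and "h = 2 / (2 * real p + 1)" and "K = (real p)\<^sup>2 / 2"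
  define \<psi> where "\<psi> = smult 3 u + smult ((a - 2 * x) / K) k"
  have K_pos: "0 < K"
    using assms(1) by (simp add: K_def)
  have deg_k: "degree k < p"
    using degree_legendre_kernel[of p 1] assms(1) unfolding k_def by linarith
  have norm_\<eta>: "l2_inner \<eta> \<eta> = N + a\<^sup>2 * h"
    using l2_inner_legendre_decomposition[OF deg_u] by (simp add: \<eta> N_def h_def)
  have "J_funct \<psi> \<eta> = 2 * N - (a - 2 * x)\<^sup>2 / (2 * (real p)\<^sup>2) - a\<^sup>2 / (2 * (2 * real p + 1))"
    using J_funct_legendre_construction[OF assms(1) deg_u, where d = "a - 2 * x" and a = a]
    unfolding \<psi>_def \<eta> k_def K_def N_def .
  moreover have "(a - 2 * x)\<^sup>2 / (2 * (real p)\<^sup>2) + (1 + 4 * c) * a\<^sup>2 / (2 * (2 * real p + 1))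
      \<le> (2 - c) * N"
    using endpoint_estimateD[OF assms(2) deg_u] assms(4)
    by (simp add: \<eta> x_def N_def poly_legendre_minus_one)
  moreover have "c * (a\<^sup>2 * h) + a\<^sup>2 / (2 * (2 * real p + 1)) = (1 + 4 * c) * a\<^sup>2 / (2 * (2 * real p + 1))"
    by (simp add: h_def field_simps add_nonneg_eq_0_iff)
  ultimately have J_bound: "c * l2_inner \<eta> \<eta> \<le> J_funct \<psi> \<eta>"
    unfolding norm_\<eta> distrib_left left_diff_distrib by linarith
  have \<psi>_bound: "l2_inner \<psi> \<psi> \<le> 34 * l2_inner \<eta> \<eta>"
    using l2_inner_legendre_psi_le[OF assms(1) deg_u, of a]
    unfolding norm_\<eta> \<psi>_def k_def K_def x_def N_def h_def .
  have deg_\<psi>: "degree \<psi> \<le> p - 1"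
    using deg_u deg_k unfolding \<psi>_def by (intro degree_add_le order.trans[OF degree_smult_le]) auto
  have "poly k 1 = K"
    using legendre_kernel_diagonal[of 1 p] by (simp add: k_def K_def)
  then have "poly \<psi> 1 = poly \<eta> 1"
    using K_pos by (simp add: \<psi>_def \<eta> x_def poly_legendre_one)
  then show ?thesis
    using deg_\<psi> J_bound \<psi>_bound by blast
qed

lemma l2_inner_self_eq_integral: "l2_inner f f = integral {-1..1} (\<lambda>x. (poly f x)\<^sup>2)"
  by (simp add: l2_inner_def power2_eq_square)

theorem lemma8:
  fixes p :: nat
  assumes "1 \<le> p" and "p \<le> 13"
  shows "\<exists>c C :: real. c > 0 \<and> C > 0 \<and>
    (\<forall>\<eta> :: real poly. degree \<eta> \<le> p \<and> poly \<eta> (-1) = 0 \<longrightarrow>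
      (\<exists>\<psi> :: real poly. degree \<psi> \<le> p - 1 \<and> poly \<psi> 1 = poly \<eta> 1 \<and>
        J_funct \<psi> \<eta> \<ge> c * integral {-1..1} (\<lambda>x. (poly \<eta> x)^2) \<and>
        integral {-1..1} (\<lambda>x. (poly \<psi> x)^2) \<le> C * integral {-1..1} (\<lambda>x. (poly \<eta> x)^2)))"
proof -
  have "\<forall>\<eta>. degree \<eta> \<le> p \<and> poly \<eta> (-1) = 0 \<longrightarrow>
      (\<exists>\<psi>. degree \<psi> \<le> p - 1 \<and> poly \<psi> 1 = poly \<eta> 1 \<and>
        1 / 256 * l2_inner \<eta> \<eta> \<le> J_funct \<psi> \<eta> \<and> l2_inner \<psi> \<psi> \<le> 34 * l2_inner \<eta> \<eta>)"
    using exists_psi_bounding_J_funct[OF assms(1) endpoint_estimate_upto_13[OF assms]] by blast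
  then show ?thesis
    unfolding l2_inner_self_eq_integral by (intro exI[of _ "1 / 256"] exI[of _ 34] conjI) simp_all
qed

end
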